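(* Let $(M,P,g)$ be a 4-dimensional Riemannian almost product manifold with $\operatorname{tr}P=0$. A curvature-like tensor $L$ on $M$ is a Riemannian $P$-tensor if and only if $$L=\frac{1}{8}\left\{\tau(L)(\pi_1+\pi_2)+\tau^*(L)\pi_3\right\}.$$
   Context: A Riemannian almost product manifold $(M,P,g)$: $M$ smooth, $P$ a $(1,1)$-tensor field with $P^2=\mathrm{id}$, $g$ Riemannian with $g(Px,Py)=g(x,y)$. A curvature-like tensor is a $(0,4)$-tensor $L$ with $L(x,y,z,w)=-L(y,x,z,w)=-L(x,y,w,z)$ and $L(x,y,z,w)+L(y,z,x,w)+L(z,x,y,w)=0$; it is a Riemannian $P$-tensor if moreover $L(x,y,Pz,Pw)=L(x,y,z,w)$. Put $\widetilde g(x,y)=g(x,Py)$. For a $(0,2)$-tensor $S$ let $\psi_1(S)(x,y,z,w)=g(y,z)S(x,w)-g(x,z)S(y,w)+S(y,z)g(x,w)-S(x,z)g(y,w)$ and $\psi_2(S)(x,y,z,w)=\psi_1(S)(x,y,Pz,Pw)$; set $\pi_1=\tfrac12\psi_1(g)$, $\pi_2=\tfrac12\psi_2(g)$, $\pi_3=\psi_1(\widetilde g)$. For a basis $\{e_i\}$ with $g^{ij}$ the inverse of $(g(e_i,e_j))$: $\rho(L)(y,z)=\sum g^{ij}L(e_i,y,z,e_j)$, $\tau(L)=\sum g^{ij}\rho(L)(e_i,e_j)$, $\rho^*(L)(y,z)=\sum g^{ij}L(e_i,y,z,Pe_j)$, $\tau^*(L)=\sum g^{ij}\rho^*(L)(e_i,e_j)$.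 *)

theory Defs
  imports "HOL-Analysis.Analysis"
begin

text \<open>Pointwise (tangent-space) setting: the tangent space at a point is a real
inner product space 'a :: euclidean_space, the metric g is the inner product,
and Basis is a g-orthonormal basis, so that g^{ij} is the identity matrix.\<close>

type_synonym 'a tensor4 = "'a \<Rightarrow> 'a \<Rightarrow> 'a \<Rightarrow> 'a \<Rightarrow> real"
type_synonym 'a tensor2 = "'a \<Rightarrow> 'a \<Rightarrow> real"

definition almost_product_structure :: "('a::euclidean_space \<Rightarrow> 'a) \<Rightarrow> bool" where
  "almost_product_structure P \<longleftrightarrow> linear P \<and> (\<forall>x. P (P x) = x) \<and>
     (\<forall>x y. inner (P x) (P y) = inner x y)"

definition trace_op :: "('a::euclidean_space \<Rightarrow> 'a) \<Rightarrow> real" where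
  "trace_op P = (\<Sum>b\<in>Basis. inner (P b) b)"

definition multilinear4 :: "('a::real_vector) tensor4 \<Rightarrow> bool" where
  "multilinear4 L \<longleftrightarrow>
     (\<forall>y z w. linear (\<lambda>x. L x y z w)) \<and> (\<forall>x z w. linear (\<lambda>y. L x y z w)) \<and>
     (\<forall>x y w. linear (\<lambda>z. L x y z w)) \<and> (\<forall>x y z. linear (\<lambda>w. L x y z w))"

definition curvature_like :: "('a::real_vector) tensor4 \<Rightarrow> bool" where
  "curvature_like L \<longleftrightarrow> multilinear4 L \<and>
     (\<forall>x y z w. L x y z w = - L y x z w) \<and>
     (\<forall>x y z w. L x y z w = - L x y w z) \<and>
     (\<forall>x y z w. L x y z w + L y z x w + L z x y w = 0)"

definition riemannian_P_tensor :: "('a \<Rightarrow> 'a) \<Rightarrow> ('a::real_vector) tensor4 \<Rightarrow> bool" where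
  "riemannian_P_tensor P L \<longleftrightarrow> curvature_like L \<and>
     (\<forall>x y z w. L x y (P z) (P w) = L x y z w)"

definition psi1 :: "('a::real_inner) tensor2 \<Rightarrow> 'a tensor4" where
  "psi1 S x y z w = inner y z * S x w - inner x z * S y w + S y z * inner x w - S x z * inner y w"

definition psi2 :: "('a \<Rightarrow> 'a) \<Rightarrow> ('a::real_inner) tensor2 \<Rightarrow> 'a tensor4" where
  "psi2 P S x y z w = psi1 S x y (P z) (P w)"

definition gtilde :: "('a \<Rightarrow> 'a) \<Rightarrow> ('a::real_inner) tensor2" where
  "gtilde P x y = inner x (P y)"

definition pi1 :: "('a::real_inner) tensor4" where
  "pi1 x y z w = (1/2) * psi1 inner x y z w"

definition pi2 :: "('a \<Rightarrow> 'a) \<Rightarrow> ('a::real_inner) tensor4" where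
  "pi2 P x y z w = (1/2) * psi2 P inner x y z w"

definition pi3 :: "('a \<Rightarrow> 'a) \<Rightarrow> ('a::real_inner) tensor4" where
  "pi3 P x y z w = psi1 (gtilde P) x y z w"

definition ricci :: "('a::euclidean_space) tensor4 \<Rightarrow> 'a tensor2" where
  "ricci L y z = (\<Sum>e\<in>Basis. L e y z e)"

definition scal :: "('a::euclidean_space) tensor4 \<Rightarrow> real" where
  "scal L = (\<Sum>e\<in>Basis. ricci L e e)"

definition ricci_star :: "('a \<Rightarrow> 'a) \<Rightarrow> ('a::euclidean_space) tensor4 \<Rightarrow> 'a tensor2" where
  "ricci_star P L y z = (\<Sum>e\<in>Basis. L e y z (P e))"

definition scal_star :: "('a \<Rightarrow> 'a) \<Rightarrow> ('a::euclidean_space) tensor4 \<Rightarrow> real" where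
  "scal_star P L = (\<Sum>e\<in>Basis. ricci_star P L e e)"

end

theory Submission imports Defs begin

(* Let P_plus = (id + P)/2 and P_minus = (id - P)/2 be the orthogonal
   projections onto the (+1)- and (-1)-eigenspaces of P.  A Riemannian P-tensor L
   vanishes as soon as one of its last (hence, by pair symmetry, also its first)
   two arguments is mixed between the eigenspaces, so L splits as L(++++) + L(----).
   If dim = 4 and tr P = 0, both eigenspaces are planes, and a curvature-like tensor
   on a plane is a multiple of the "plane tensor" G_Q(x,y,z,w) = g(x,Qz)g(y,Qw) -
   g(x,Qw)g(y,Qz) of its projection Q.  Hence L = a G_+ + b G_-.  Contracting gives
   tau = -2a-2b and tau* = -2a+2b, while expanding Q = (id +- P)/2 gives
   G_+- = -(pi1 + pi2 +- pi3)/4; together these yield the formula.  Conversely,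
   pi1 + pi2 and pi3 are P-invariant in the last two slots. *)

context
  fixes L :: "'a::real_vector tensor4"
  assumes curv: "curvature_like L"
begin

lemma curv_linear:
  shows "linear (\<lambda>x. L x y z w)" and "linear (\<lambda>y. L x y z w)"
  and "linear (\<lambda>z. L x y z w)" and "linear (\<lambda>w. L x y z w)"
proof -
  have "multilinear4 L" using curv unfolding curvature_like_def by blast
  then show "linear (\<lambda>x. L x y z w)" "linear (\<lambda>y. L x y z w)"
    "linear (\<lambda>z. L x y z w)" "linear (\<lambda>w. L x y z w)"
    unfolding multilinear4_def by blast+
qed

lemma curv_add:
  "L (a+b) y z w = L a y z w + L b y z w"
  "L x (a+b) z w = L x a z w + L x b z w"
  "L x y (a+b) w = L x y a w + L x y b w"
  "L x y z (a+b) = L x y z a + L x y z b"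
  using curv_linear[THEN linear_add] by auto

lemma curv_scale:
  "L (r *\<^sub>R a) y z w = r * L a y z w"
  "L x (r *\<^sub>R a) z w = r * L x a z w"
  "L x y (r *\<^sub>R a) w = r * L x y a w"
  "L x y z (r *\<^sub>R a) = r * L x y z a"
  using curv_linear[THEN linear_scale] by auto

lemma curv_neg:
  "L (- a) y z w = - L a y z w"
  "L x (- a) z w = - L x a z w"
  "L x y (- a) w = - L x y a w"
  "L x y z (- a) = - L x y z a"
  using curv_linear[THEN linear_neg] by auto

lemma curv_antisym1: "L x y z w = - L y x z w"
  and curv_antisym2: "L x y z w = - L x y w z"
  and curv_bianchi: "L x y z w + L y z x w + L z x y w = 0"
  using curv unfolding curvature_like_def by blast+

lemma curv_swap_both: "L x y z w = L y x w z"
  using curv_antisym1[of x y z w] curv_antisym2[of y x z w] by simp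

text \<open>Pair symmetry, from four instances of the first Bianchi identity.\<close>
lemma curv_pair_sym: "L x y z w = L z w x y"
proof -
  have "L x y z w + L y z x w + L z x y w = 0"
    and "L y z w x + L z w y x + L w y z x = 0"
    and "L z w x y + L w x z y + L x z w y = 0"
    and "L w x y z + L x y w z + L y w x z = 0"
    by (rule curv_bianchi)+
  moreover have
    "L y z x w = L z y w x" "L z x y w = - L x z y w" "L y z w x = L z y x w"
    "L z w y x = L w z x y" "L w y z x = L y w x z" "L w x z y = L x w y z"
    "L x z w y = - L x z y w" "L w x y z = L x w z y" "L x y w z = - L x y z w"
    "L z y w x = - L y z w x" "L z y x w = - L y z x w" "L w z x y = - L z w x y"
    "L x w y z = - L w x y z" "L x w z y = - L x w y z"
    by (rule curv_swap_both curv_antisym1 curv_antisym2)+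
  ultimately show ?thesis by linarith
qed

lemma curv_diag: "L x x z w = 0" "L x y z z = 0"
  using curv_antisym1[of x x z w] curv_antisym2[of x y z z] by auto

lemma curv_on_plane:
  "L (a *\<^sub>R u + b *\<^sub>R v) (c *\<^sub>R u + d *\<^sub>R v) (e *\<^sub>R u + f *\<^sub>R v) (g *\<^sub>R u + h *\<^sub>R v)
   = (a*d - b*c) * (e*h - f*g) * L u v u v"
proof -
  have swapped: "L v u u v = - L u v u v" "L u v v u = - L u v u v" "L v u v u = L u v u v"
    using curv_antisym1[of v u u v] curv_antisym2[of u v v u] curv_swap_both[of v u v u]
    by auto
  show ?thesis by (simp add: curv_add curv_scale curv_diag swapped algebra_simps)
qed

end


definition P_plus :: "('a::real_vector \<Rightarrow> 'a) \<Rightarrow> 'a \<Rightarrow> 'a" where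
  "P_plus P x = (1/2) *\<^sub>R (x + P x)"

definition P_minus :: "('a::real_vector \<Rightarrow> 'a) \<Rightarrow> 'a \<Rightarrow> 'a" where
  "P_minus P x = (1/2) *\<^sub>R (x - P x)"

lemma inner_P_plus: "inner x (P_plus P y) = (inner x y + inner x (P y)) / 2"
  and inner_P_minus: "inner x (P_minus P y) = (inner x y - inner x (P y)) / 2"
  unfolding P_plus_def P_minus_def by (simp_all add: inner_add_right inner_diff_right)

context
  fixes P :: "'a::euclidean_space \<Rightarrow> 'a"
  assumes aps: "almost_product_structure P"
begin

lemma P_linear: "linear P"
  and P_involutive[simp]: "P (P x) = x"
  and P_isometry: "inner (P x) (P y) = inner x y"
  using aps unfolding almost_product_structure_def by auto

lemma P_add[simp]: "P (x + y) = P x + P y"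
  and P_scale[simp]: "P (r *\<^sub>R x) = r *\<^sub>R P x"
  and P_neg[simp]: "P (- x) = - P x"
  and P_diff[simp]: "P (x - y) = P x - P y"
  using linear_add[OF P_linear] linear_scale[OF P_linear]
    linear_neg[OF P_linear] linear_diff[OF P_linear] by auto

lemma P_selfadjoint: "inner (P x) y = inner x (P y)"
  using P_isometry[of x "P y"] by simp

lemma P_of_P_plus[simp]: "P (P_plus P x) = P_plus P x"
  and P_of_P_minus[simp]: "P (P_minus P x) = - P_minus P x"
  and P_plus_of_P[simp]: "P_plus P (P x) = P_plus P x"
  and P_minus_of_P[simp]: "P_minus P (P x) = - P_minus P x"
  unfolding P_plus_def P_minus_def by (auto simp: algebra_simps)

lemma P_plus_minus_sum: "P_plus P x + P_minus P x = x"
  unfolding P_plus_def P_minus_def by (simp add: scaleR_add_right[symmetric])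

lemma P_plus_fixed: "P y = y \<Longrightarrow> P_plus P y = y"
  and P_minus_fixed: "P y = - y \<Longrightarrow> P_minus P y = y"
  unfolding P_plus_def P_minus_def by (simp_all add: scaleR_2[symmetric])

lemma P_plus_idem[simp]: "P_plus P (P_plus P x) = P_plus P x"
  and P_minus_idem[simp]: "P_minus P (P_minus P x) = P_minus P x"
  by (simp_all add: P_plus_fixed P_minus_fixed)

lemma P_plus_selfadjoint: "inner (P_plus P x) y = inner x (P_plus P y)"
  and P_minus_selfadjoint: "inner (P_minus P x) y = inner x (P_minus P y)"
  unfolding P_plus_def P_minus_def
  by (auto simp: inner_add_left inner_add_right inner_diff_left inner_diff_right P_selfadjoint)

lemma P_plus_linear: "linear (P_plus P)" and P_minus_linear: "linear (P_minus P)"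
  by (auto intro!: linearI simp: P_plus_def P_minus_def algebra_simps)

end

section \<open>Riemannian P-tensors split along the eigenspaces\<close>

context
  fixes P :: "'a::euclidean_space \<Rightarrow> 'a" and L :: "'a tensor4"
  assumes aps: "almost_product_structure P" and rpt: "riemannian_P_tensor P L"
begin

lemma rpt_curv: "curvature_like L"
  using rpt unfolding riemannian_P_tensor_def by auto

lemma rpt_invariant: "L x y (P z) (P w) = L x y z w"
  using rpt unfolding riemannian_P_tensor_def by auto

lemma rpt_mixed34:
  assumes "P a = a" "P b = - b" shows "L x y a b = 0" "L x y b a = 0"
proof -
  have "L x y a b = L x y (P a) (P b)" by (rule rpt_invariant[symmetric])
  also have "\<dots> = - L x y a b" using assms curv_neg[OF rpt_curv] by simp
  finally show "L x y a b = 0" by simp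
  then show "L x y b a = 0" using curv_antisym2[OF rpt_curv, of x y b a] by simp
qed

lemma rpt_mixed12:
  assumes "P a = a" "P b = - b" shows "L a b z w = 0" "L b a z w = 0"
  using rpt_mixed34[OF assms, of z w] curv_pair_sym[OF rpt_curv, of a b z w]
    curv_pair_sym[OF rpt_curv, of b a z w] by auto

lemma rpt_mixed_pairs:
  assumes "P a = a" "P b = b" "P c = - c" "P d = - d"
  shows "L a b c d = 0" "L c d a b = 0"
proof -
  have "L a b c d + L b c a d + L c a b d = 0" by (rule curv_bianchi[OF rpt_curv])
  moreover have "L b c a d = 0" "L c a b d = 0" using rpt_mixed12 assms by auto
  ultimately show "L a b c d = 0" by simp
  then show "L c d a b = 0" using curv_pair_sym[OF rpt_curv, of a b c d] by simp
qed

lemma rpt_split: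
  "L x y z w = L (P_plus P x) (P_plus P y) (P_plus P z) (P_plus P w)
             + L (P_minus P x) (P_minus P y) (P_minus P z) (P_minus P w)"
proof -
  have "L x y z w = L (P_plus P x + P_minus P x) (P_plus P y + P_minus P y)
                      (P_plus P z + P_minus P z) (P_plus P w + P_minus P w)"
    by (simp add: P_plus_minus_sum[OF aps])
  then show ?thesis
    using P_of_P_plus[OF aps] P_of_P_minus[OF aps]
    by (simp add: curv_add[OF rpt_curv] rpt_mixed34 rpt_mixed12 rpt_mixed_pairs)
qed

end

section \<open>Orthogonal projections of rank two\<close>

lemma orthonormal_expansion:
  fixes B :: "'a::euclidean_space set"
  assumes fin: "finite B" and orth: "pairwise orthogonal B"
    and unit: "\<And>u. u \<in> B \<Longrightarrow> norm u = 1" and x: "x \<in> span B"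
  shows "x = (\<Sum>u\<in>B. inner x u *\<^sub>R u)"
proof -
  define y where "y = x - (\<Sum>u\<in>B. inner x u *\<^sub>R u)"
  have y_span: "y \<in> span B" unfolding y_def
    by (intro span_diff x span_sum span_scale span_base)
  have "orthogonal y v" if v: "v \<in> B" for v
  proof -
    have "(\<Sum>u\<in>B. inner x u * inner u v)
          = inner x v * inner v v + (\<Sum>u\<in>B-{v}. inner x u * inner u v)"
      using fin v by (simp add: sum.remove)
    also have "(\<Sum>u\<in>B-{v}. inner x u * inner u v) = 0"
      using orth v by (intro sum.neutral) (auto simp: pairwise_def orthogonal_def)
    also have "inner v v = 1" using unit[OF v] by (simp add: power2_norm_eq_inner[symmetric])
    finally have "(\<Sum>u\<in>B. inner x u * inner u v) = inner x v" by simp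
    then show ?thesis unfolding y_def orthogonal_def
      by (simp add: inner_diff_left inner_sum_left)
  qed
  then have "orthogonal y y" using y_span orthogonal_to_span by blast
  then show ?thesis unfolding y_def by (simp add: orthogonal_def)
qed

lemma rank_two_projection:
  fixes Q :: "'a::euclidean_space \<Rightarrow> 'a"
  assumes lin: "linear Q" and idem: "\<And>x. Q (Q x) = Q x"
    and sym: "\<And>x y. inner (Q x) y = inner x (Q y)"
    and tr: "(\<Sum>b\<in>Basis. inner b (Q b)) = 2"
  obtains u1 u2 where "\<And>x. Q x = inner x u1 *\<^sub>R u1 + inner x u2 *\<^sub>R u2"
proof -
  define S where "S = {x. Q x = x}"
  have "subspace S" unfolding S_def subspace_def
    using linear_0[OF lin] linear_add[OF lin] linear_scale[OF lin] by auto
  then obtain B where BS: "B \<subseteq> S" and orth: "pairwise orthogonal B"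
    and unit: "\<And>x. x \<in> B \<Longrightarrow> norm x = 1" and ind: "independent B" and spB: "span B = S"
    using orthonormal_basis_subspace by metis
  have fin: "finite B" using ind independent_imp_finite by blast
  have expand: "Q x = (\<Sum>u\<in>B. inner x u *\<^sub>R u)" for x
  proof -
    have "Q x \<in> span B" using spB idem unfolding S_def by auto
    then have "Q x = (\<Sum>u\<in>B. inner (Q x) u *\<^sub>R u)"
      using orthonormal_expansion[OF fin orth] unit by blast
    also have "\<dots> = (\<Sum>u\<in>B. inner x u *\<^sub>R u)"
    proof (rule sum.cong[OF refl])
      fix u assume "u \<in> B"
      then have "Q u = u" using BS unfolding S_def by auto
      then show "inner (Q x) u *\<^sub>R u = inner x u *\<^sub>R u" by (simp add: sym)
    qed
    finally show ?thesis .
  qed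
  have "(\<Sum>b\<in>Basis. inner b (Q b)) = (\<Sum>u\<in>B. \<Sum>b\<in>Basis. inner u b * inner u b)"
    by (simp add: expand inner_sum_right sum.swap[of _ Basis] inner_commute)
  also have "\<dots> = (\<Sum>u\<in>B. 1)"
    using unit by (intro sum.cong refl)
      (simp add: euclidean_inner[symmetric] power2_norm_eq_inner[symmetric])
  finally have "card B = 2" using tr by simp
  then obtain u1 u2 where "B = {u1, u2}" "u1 \<noteq> u2" by (auto simp: card_2_iff)
  then show ?thesis using that expand by simp
qed

section \<open>The plane tensor of a projection\<close>

text \<open>For the orthogonal projection Q onto a plane, this is (minus) the curvature
  tensor of the unit-curvature metric on that plane, pulled back by Q.\<close>
definition plane_tensor :: "('a::real_inner \<Rightarrow> 'a) \<Rightarrow> 'a tensor4" where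
  "plane_tensor Q x y z w = inner x (Q z) * inner y (Q w) - inner x (Q w) * inner y (Q z)"

lemma plane_tensor_onb:
  assumes "\<And>x. Q x = inner x u1 *\<^sub>R u1 + inner x u2 *\<^sub>R u2"
  shows "plane_tensor Q x y z w
     = (inner x u1 * inner y u2 - inner x u2 * inner y u1)
     * (inner z u1 * inner w u2 - inner z u2 * inner w u1)"
  unfolding plane_tensor_def assms by (simp add: inner_add_right algebra_simps)

lemma plane_tensor_contraction:
  fixes Q :: "'a::euclidean_space \<Rightarrow> 'a"
  assumes idem: "\<And>x. Q (Q x) = Q x" and sym: "\<And>x y. inner (Q x) y = inner x (Q y)"
  defines "t \<equiv> \<Sum>b\<in>Basis. inner b (Q b)"
  shows "(\<Sum>f\<in>Basis. \<Sum>e\<in>Basis. plane_tensor Q e f f e) = t * (1 - t)"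
proof -
  have square: "(\<Sum>e\<in>Basis. inner e (Q f) * inner f (Q e)) = inner f (Q f)" for f
  proof -
    have "(\<Sum>e\<in>Basis. inner e (Q f) * inner f (Q e)) = (\<Sum>e\<in>Basis. inner (Q f) e * inner (Q f) e)"
      by (intro sum.cong refl) (metis sym inner_commute)
    also have "\<dots> = inner (Q f) (Q f)" by (simp add: euclidean_inner[symmetric])
    also have "\<dots> = inner f (Q f)" by (simp add: sym idem)
    finally show ?thesis .
  qed
  have "(\<Sum>e\<in>Basis. plane_tensor Q e f f e) = inner f (Q f) * (1 - t)" for f
    unfolding plane_tensor_def t_def
    by (simp add: sum_subtractf square sum_distrib_right[symmetric] algebra_simps)
  then show ?thesis by (simp add: sum_distrib_right[symmetric] t_def)
qed

lemma plane_tensor_P_plus: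
  "plane_tensor (P_plus P) x y z w = - (pi1 x y z w + pi2 P x y z w + pi3 P x y z w) / 4"
  and plane_tensor_P_minus:
  "plane_tensor (P_minus P) x y z w = - (pi1 x y z w + pi2 P x y z w - pi3 P x y z w) / 4"
  by (simp_all add: plane_tensor_def inner_P_plus inner_P_minus pi1_def pi2_def pi3_def
      psi1_def psi2_def gtilde_def field_simps)

context
  fixes P :: "'a::euclidean_space \<Rightarrow> 'a"
  assumes aps: "almost_product_structure P" and dim: "DIM('a) = 4" and trP: "trace_op P = 0"
begin

lemma trace_P_plus: "(\<Sum>b\<in>Basis. inner b (P_plus P b)) = 2"
  and trace_P_minus: "(\<Sum>b\<in>Basis. inner b (P_minus P b)) = 2"
proof -
  have "(\<Sum>b\<in>(Basis::'a set). inner b b) = 4"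
    using dim by (simp add: inner_Basis)
  moreover have "(\<Sum>b\<in>(Basis::'a set). inner b (P b)) = 0"
    using trP unfolding trace_op_def by (simp add: inner_commute)
  ultimately show "(\<Sum>b\<in>Basis. inner b (P_plus P b)) = 2"
    and "(\<Sum>b\<in>Basis. inner b (P_minus P b)) = 2"
    by (simp_all add: inner_P_plus inner_P_minus sum_divide_distrib[symmetric]
        sum.distrib sum_subtractf)
qed

lemma contraction_P_plus: "(\<Sum>f\<in>Basis. \<Sum>e\<in>Basis. plane_tensor (P_plus P) e f f e) = -2"
  and contraction_P_minus: "(\<Sum>f\<in>Basis. \<Sum>e\<in>Basis. plane_tensor (P_minus P) e f f e) = -2"
  using plane_tensor_contraction[of "P_plus P"] plane_tensor_contraction[of "P_minus P"]
    P_plus_idem[OF aps] P_plus_selfadjoint[OF aps] trace_P_plus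
    P_minus_idem[OF aps] P_minus_selfadjoint[OF aps] trace_P_minus
  by simp_all

lemma rpt_representation:
  assumes rpt: "riemannian_P_tensor P L"
  obtains a b where
    "\<And>x y z w. L x y z w = a * plane_tensor (P_plus P) x y z w + b * plane_tensor (P_minus P) x y z w"
proof -
  have curv: "curvature_like L" by (rule rpt_curv[OF aps rpt])
  obtain u1 u2 where U: "\<And>x. P_plus P x = inner x u1 *\<^sub>R u1 + inner x u2 *\<^sub>R u2"
    using rank_two_projection[OF P_plus_linear[OF aps] P_plus_idem[OF aps]
        P_plus_selfadjoint[OF aps] trace_P_plus] by metis
  obtain v1 v2 where V: "\<And>x. P_minus P x = inner x v1 *\<^sub>R v1 + inner x v2 *\<^sub>R v2"
    using rank_two_projection[OF P_minus_linear[OF aps] P_minus_idem[OF aps]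
        P_minus_selfadjoint[OF aps] trace_P_minus] by metis
  have "L x y z w = L u1 u2 u1 u2 * plane_tensor (P_plus P) x y z w
                  + L v1 v2 v1 v2 * plane_tensor (P_minus P) x y z w" for x y z w
    by (subst rpt_split[OF aps rpt])
      (simp add: U V curv_on_plane[OF curv] plane_tensor_onb[OF U] plane_tensor_onb[OF V])
  then show ?thesis by (rule that)
qed

lemma scalars_of_combination:
  assumes L: "\<And>x y z w. L x y z w
     = a * plane_tensor (P_plus P) x y z w + b * plane_tensor (P_minus P) x y z w"
  shows "scal L = -2*a - 2*b" and "scal_star P L = -2*a + 2*b"
proof -
  have twist: "plane_tensor (P_plus P) x y z (P w) = plane_tensor (P_plus P) x y z w"
    "plane_tensor (P_minus P) x y z (P w) = - plane_tensor (P_minus P) x y z w" for x y z w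
    by (simp_all add: plane_tensor_def P_plus_of_P[OF aps] P_minus_of_P[OF aps])
  show "scal L = -2*a - 2*b"
    unfolding scal_def ricci_def L
    by (simp add: sum.distrib sum_distrib_left[symmetric] contraction_P_plus contraction_P_minus)
  show "scal_star P L = -2*a + 2*b"
    unfolding scal_star_def ricci_star_def L twist
    by (simp add: sum_subtractf sum_distrib_left[symmetric]
        contraction_P_plus contraction_P_minus)
qed

end

lemma model_tensors_P_invariant:
  assumes "almost_product_structure P"
  shows "pi1 x y (P z) (P w) + pi2 P x y (P z) (P w) = pi1 x y z w + pi2 P x y z w"
    and "pi3 P x y (P z) (P w) = pi3 P x y z w"
  by (simp_all add: P_involutive[OF assms] pi1_def pi2_def pi3_def psi1_def psi2_def
      gtilde_def algebra_simps)

theorem theorem3p2: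
  fixes P :: "'a::euclidean_space \<Rightarrow> 'a" and L :: "'a tensor4"
  assumes "DIM('a) = 4"
    and "almost_product_structure P"
    and "trace_op P = 0"
    and "curvature_like L"
  shows "riemannian_P_tensor P L \<longleftrightarrow>
    (\<forall>x y z w. L x y z w = (1/8) * (scal L * (pi1 x y z w + pi2 P x y z w)
                                   + scal_star P L * pi3 P x y z w))"
proof
  assume "riemannian_P_tensor P L"
  then obtain a b where L: "\<And>x y z w. L x y z w
      = a * plane_tensor (P_plus P) x y z w + b * plane_tensor (P_minus P) x y z w"
    using rpt_representation[OF assms(2,1,3)] by blast
  show "\<forall>x y z w. L x y z w = (1/8) * (scal L * (pi1 x y z w + pi2 P x y z w)
                                   + scal_star P L * pi3 P x y z w)"
    unfolding scalars_of_combination[OF assms(2,1,3) L] L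
    by (simp add: plane_tensor_P_plus plane_tensor_P_minus field_simps)
next
  assume formula: "\<forall>x y z w. L x y z w = (1/8) * (scal L * (pi1 x y z w + pi2 P x y z w)
                                   + scal_star P L * pi3 P x y z w)"
  have "L x y (P z) (P w) = L x y z w" for x y z w
    using model_tensors_P_invariant[OF assms(2), of x y z w] by (simp add: formula)
  then show "riemannian_P_tensor P L"
    using assms(4) unfolding riemannian_P_tensor_def by blast
qed

end
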